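(* Let $(g(m))_{m\ge1}$ be a sequence of complex numbers such that the series $\sum_{m\ge1}g(m)/m$ and $\sum_{m\ge1}g(m)(\log m)/m$ both converge. Define $G^\sharp(x)=\sum_{m>x}g(m)/m$ for real $x>0$ and assume that $\int_1^\infty|G^\sharp(t)|\,dt/t$ converges. Then for every real $D\ge1$, \[ \sum_{n\le D}\frac{(g\star\mathbf 1)(n)}{n}=\sum_{m\ge1}\frac{g(m)}{m}\Bigl(\log\frac{D}{m}+\gamma\Bigr)+\int_{e^\gamma D}^\infty G^\sharp(t)\frac{dt}{t}+E, \] where \[ |E|\le \frac1D\int_1^{e^\gamma}\sum_{m\le uD}|g(m)|\,\frac{du}{u}. \]
   Context: $\gamma$ is Euler's constant. $(g\star\mathbf 1)(n)=\sum_{m\mid n}g(m)$ is the Dirichlet convolution of $g$ with the constant function $1$. *)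

theory Defs
  imports "HOL-Analysis.Analysis"
begin

text \<open>Tail sum  G#(x) = sum over m > x of g(m)/m  (terms with m = 0 vanish anyway).\<close>
definition Gsharp :: "(nat \<Rightarrow> complex) \<Rightarrow> real \<Rightarrow> complex" where
  "Gsharp g x = (\<Sum>m. if real m > x then g m / of_nat m else 0)"

definition conv_one :: "(nat \<Rightarrow> complex) \<Rightarrow> nat \<Rightarrow> complex" where
  "conv_one g n = (\<Sum>m\<in>{m. m dvd n}. g m)"

end

theory Submission
  imports Defs "HOL-Real_Asymp.Real_Asymp"
begin

text \<open>
  Interchanging the order of summation, the left-hand side is the sum of \<open>g(m)/m \<cdot> H(\<lfloor>D/m\<rfloor>)\<close>
  over \<open>m \<le> D\<close>, where \<open>H\<close> denotes the harmonic numbers, and \<open>|H(\<lfloor>y\<rfloor>) - log y - \<gamma>| \<le> \<gamma>/y\<close>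
  for \<open>y \<ge> 1\<close>. With \<open>T = e\<^sup>\<gamma> D\<close> the weights on the right are \<open>log (D/m) + \<gamma> = log (T/m)\<close>; for
  \<open>m > T\<close> this is minus the integral of \<open>dt/t\<close> over \<open>[T, m]\<close>, so summing these terms by parts
  cancels the integral of \<open>G\<^sup>\<sharp>(t)/t\<close> over \<open>[T, \<infinity>)\<close>. The boundary term \<open>G\<^sup>\<sharp>(M) log (M/T)\<close> tends
  to \<open>0\<close> by Abel summation of the tail of the convergent series \<open>\<Sum> g(m) log m / m\<close> against the
  decreasing weights \<open>1 / log m\<close>. What remains is the finite sum of \<open>g(m)/m \<cdot> log (T/m)\<close> over
  \<open>m \<le> T\<close>, and comparing it termwise with the left-hand side, each \<open>m \<le> T\<close> contributes at most
  \<open>|g(m)| (\<gamma> - log (max 1 (m/D))) / D\<close>; summed over \<open>m\<close>, this is exactly the integral in the bound.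
\<close>

section \<open>Harmonic numbers\<close>

text \<open>
  The library's bound \<open>H(n) - log (n + 1) \<ge> \<gamma> - 1/(2n)\<close> is too weak for small \<open>n\<close> in
  \<open>harm_floor_approx\<close>; the correction \<open>2/(4n + 3)\<close> makes the sequence decrease to \<open>\<gamma>\<close>.
\<close>

lemma decseq_harm_minus_ln_Suc_corrected:
  "decseq (\<lambda>n. harm n - ln (real n + 1) + 2 / (4 * real n + 3) :: real)"
proof (rule decseq_SucI)
  fix n :: nat
  define k where "k = real n + 1"
  have k: "k \<ge> 1"
    by (simp add: k_def)
  have "2 / (2 * k + 1) \<le> ln (k + 1) - ln k"
    using ln_inverse_approx_ge[of k "k + 1"] k by simp
  moreover have "1 / k - 2 / (2 * k + 1) \<le> 2 / (4 * k - 1) - 2 / (4 * k + 3)"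
  proof -
    have "1 / k - 2 / (2 * k + 1) = 1 / (k * (2 * k + 1))"
      using k by (simp add: field_simps)
    also have "\<dots> = 8 / (8 * k * (2 * k + 1))"
      by simp
    also have "\<dots> \<le> 8 / ((4 * k - 1) * (4 * k + 3))"
    proof (rule divide_left_mono)
      show "(4 * k - 1) * (4 * k + 3) \<le> 8 * k * (2 * k + 1)"
        by (simp add: algebra_simps)
      show "0 < 8 * k * (2 * k + 1) * ((4 * k - 1) * (4 * k + 3))"
        using k by (intro mult_pos_pos) auto
    qed simp
    also have "\<dots> = 2 / (4 * k - 1) - 2 / (4 * k + 3)"
      using k by (simp add: field_simps)
    finally show ?thesis .
  qed
  ultimately show "harm (Suc n) - ln (real (Suc n) + 1) + 2 / (4 * real (Suc n) + 3)
      \<le> harm n - ln (real n + 1) + 2 / (4 * real n + 3)"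
    by (simp add: harm_Suc k_def inverse_eq_divide algebra_simps)
qed

lemma euler_mascheroni_le_harm_minus_ln_Suc:
  "euler_mascheroni - 2 / (4 * real n + 3) \<le> harm n - ln (real n + 1)"
proof -
  have "(\<lambda>n. (harm n - ln (real n)) - (ln (real n + 1) - ln (real n)) + 2 / (4 * real n + 3))
      \<longlonglongrightarrow> euler_mascheroni - 0 + 0"
    by (intro tendsto_intros euler_mascheroni_LIMSEQ) real_asymp+
  then have "(\<lambda>n. harm n - ln (real n + 1) + 2 / (4 * real n + 3)) \<longlonglongrightarrow> (euler_mascheroni :: real)"
    by simp
  from decseq_ge[OF decseq_harm_minus_ln_Suc_corrected this, of n] show ?thesis
    by simp
qed

lemma harm_minus_ln_le:
  assumes "n \<ge> 1"
  shows "harm n - ln (real n) - euler_mascheroni \<le> 1 / (2 * real n)"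
proof -
  have "harm n - ln (real n + 1) + 1 / (2 * (real n + 1)) \<le> euler_mascheroni"
    using euler_mascheroni_bounds[OF assms] by (simp add: inverse_eq_divide add.commute)
  moreover have "ln (real n + 1) - ln (real n) \<le> (1 / real n + 1 / (real n + 1)) / 2"
    using ln_inverse_approx_le[of "real n" 1] assms by (simp add: inverse_eq_divide)
  moreover have "(1 / real n + 1 / (real n + 1)) / 2 - 1 / (2 * (real n + 1)) = 1 / (2 * real n)"
    by (simp add: add_divide_distrib mult.commute)
  ultimately show ?thesis
    by linarith
qed

lemma harm_floor_approx:
  fixes y :: real
  assumes "y \<ge> 1"
  shows "\<bar>harm (nat \<lfloor>y\<rfloor>) - ln y - euler_mascheroni\<bar> \<le> euler_mascheroni / y"
proof -
  define n where "n = nat \<lfloor>y\<rfloor>"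
  have n: "n \<ge> 1" "real n \<le> y" "y < real n + 1"
    using assms unfolding n_def by linarith+
  have gamma: "euler_mascheroni > (19 / 33 :: real)"
    by (rule euler_mascheroni_gt_19_over_33)
  have "harm n - ln y - euler_mascheroni \<le> euler_mascheroni / y"
  proof -
    have "ln (real n / y) \<le> real n / y - 1"
      using n by (intro ln_le_minus_one) auto
    then have "ln y - ln (real n) \<ge> 1 - real n / y"
      using n by (simp add: ln_div)
    moreover have "y * (1 / (2 * real n) - 1 + real n / y) \<le> euler_mascheroni"
    proof -
      have "y * (1 / (2 * real n) - 1) \<le> real n * (1 / (2 * real n) - 1)"
        using n by (intro mult_right_mono_neg) auto
      then show ?thesis
        using n gamma by (simp add: algebra_simps)
    qed
    then have "1 / (2 * real n) - 1 + real n / y \<le> euler_mascheroni / y"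
      using n by (simp add: field_simps)
    ultimately show ?thesis
      using harm_minus_ln_le[OF n(1)] by linarith
  qed
  moreover have "- (euler_mascheroni / y) \<le> harm n - ln y - euler_mascheroni"
  proof -
    have "19 / 33 * (4 * real n + 3) \<le> euler_mascheroni * (4 * real n + 3)"
      using gamma by (intro mult_right_mono) auto
    then have "2 / (4 * real n + 3) \<le> euler_mascheroni / (real n + 1)"
      using n by (simp add: field_simps)
    moreover have "euler_mascheroni / (real n + 1) \<le> euler_mascheroni / y"
      using n gamma by (intro divide_left_mono) auto
    moreover have "ln y \<le> ln (real n + 1)"
      using n assms by simp
    ultimately show ?thesis
      using euler_mascheroni_le_harm_minus_ln_Suc[of n] by linarith
  qed
  ultimately show ?thesis
    unfolding n_def by linarith
qed

section \<open>The divisor sum as a weighted sum of harmonic numbers\<close>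

lemma harm_Suc_div:
  fixes m N :: nat
  assumes "m > 0"
  shows "harm (Suc N div m) = harm (N div m) + (if m dvd Suc N then real m / real (Suc N) else 0)"
proof (cases "m dvd Suc N")
  case True
  then have q: "Suc N div m = Suc (N div m)"
    using assms by (simp add: div_Suc)
  moreover have "real (Suc N) = real m * real (Suc (N div m))"
    using True q by (metis dvd_mult_div_cancel of_nat_mult)
  ultimately show ?thesis
    using True assms by (simp add: harm_Suc inverse_eq_divide)
next
  case False
  then have "Suc N div m = N div m"
    using assms by (auto simp: div_Suc dvd_eq_mod_eq_0 mod_Suc)
  with False show ?thesis
    by simp
qed

lemma conv_one_eq_sum_divisors:
  assumes "n > 0"
  shows "conv_one g n = (\<Sum>m\<in>{1..n}. if m dvd n then g m else 0)"
proof -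
  have "{m \<in> {1..n}. m dvd n} = {m. m dvd n}"
    using assms by (auto simp: Suc_le_eq dest: dvd_imp_le intro: dvd_pos_nat)
  then show ?thesis
    unfolding conv_one_def by (subst sum.inter_filter[symmetric]) simp_all
qed

lemma sum_conv_one_div_eq_sum_harm:
  "(\<Sum>n\<in>{1..N}. conv_one g n / of_nat n) = (\<Sum>m\<in>{1..N}. g m / of_nat m * of_real (harm (N div m)))"
proof (induction N)
  case (Suc N)
  have "(\<Sum>m\<in>{1..Suc N}. g m / of_nat m * of_real (harm (Suc N div m)))
      = (\<Sum>m\<in>{1..Suc N}. g m / of_nat m * of_real (harm (N div m)))
        + (\<Sum>m\<in>{1..Suc N}. if m dvd Suc N then g m / of_nat (Suc N) else 0)"
    by (auto simp: harm_Suc_div sum.distrib[symmetric] distrib_left intro!: sum.cong)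
  also have "(\<Sum>m\<in>{1..Suc N}. g m / of_nat m * of_real (harm (N div m)))
      = (\<Sum>m\<in>{1..N}. g m / of_nat m * of_real (harm (N div m)))"
    by (simp add: harm_expand)
  also have "(\<Sum>m\<in>{1..Suc N}. if m dvd Suc N then g m / of_nat (Suc N) else 0)
      = conv_one g (Suc N) / of_nat (Suc N)"
    unfolding conv_one_eq_sum_divisors[OF zero_less_Suc] sum_divide_distrib by (rule sum.cong) auto
  finally show ?case
    using Suc by simp
qed simp

lemma sum_conv_one_div_eq_sum_cutoff:
  assumes "N \<le> K"
  shows "(\<Sum>n\<in>{1..N}. conv_one g n / of_nat n)
       = (\<Sum>m\<in>{1..K}. g m / of_nat m * of_real (if m \<le> N then harm (N div m) else 0))"
  unfolding sum_conv_one_div_eq_sum_harm using assms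
  by (intro sum.mono_neutral_cong_left) auto

section \<open>Abel summation\<close>

lemma norm_sum_scaleR_minus_first_le:
  fixes a :: "nat \<Rightarrow> 'a::real_normed_vector" and b :: "nat \<Rightarrow> real"
  assumes "p \<le> q"
    and tails: "\<And>k. p \<le> k \<Longrightarrow> k \<le> q \<Longrightarrow> norm (\<Sum>m\<in>{k..q}. a m) \<le> B"
    and decreasing: "\<And>m. p \<le> m \<Longrightarrow> m < q \<Longrightarrow> b (Suc m) \<le> b m"
  shows "norm ((\<Sum>m\<in>{p..q}. b m *\<^sub>R a m) - b p *\<^sub>R (\<Sum>m\<in>{p..q}. a m)) \<le> B * (b p - b q)"
  using assms(1)
proof (induction p rule: inc_induct)
  case (step p)
  define S where "S = (\<Sum>m\<in>{Suc p..q}. b m *\<^sub>R a m)"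
  define R where "R = (\<Sum>m\<in>{Suc p..q}. a m)"
  have split: "(\<Sum>m\<in>{p..q}. b m *\<^sub>R a m) - b p *\<^sub>R (\<Sum>m\<in>{p..q}. a m)
      = (S - b (Suc p) *\<^sub>R R) + (b (Suc p) - b p) *\<^sub>R R"
    using step.hyps by (simp add: S_def R_def sum.atLeast_Suc_atMost algebra_simps)
  have "norm (S - b (Suc p) *\<^sub>R R) \<le> B * (b (Suc p) - b q)"
    using step.IH step.hyps tails decreasing by (simp add: S_def R_def)
  moreover have "norm ((b (Suc p) - b p) *\<^sub>R R) \<le> (b p - b (Suc p)) * B"
    using step.hyps tails[of "Suc p"] decreasing[of p] unfolding R_def by (simp add: mult_left_mono)
  moreover have "B * (b (Suc p) - b q) + (b p - b (Suc p)) * B = B * (b p - b q)"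
    by (simp add: algebra_simps)
  ultimately show ?case
    unfolding split using norm_triangle_ineq[of "S - b (Suc p) *\<^sub>R R" "(b (Suc p) - b p) *\<^sub>R R"] by linarith
qed simp

lemma norm_sum_scaleR_decreasing_le:
  fixes a :: "nat \<Rightarrow> 'a::real_normed_vector" and b :: "nat \<Rightarrow> real"
  assumes "p \<le> q"
    and tails: "\<And>k. p \<le> k \<Longrightarrow> k \<le> q \<Longrightarrow> norm (\<Sum>m\<in>{k..q}. a m) \<le> B"
    and decreasing: "\<And>m. p \<le> m \<Longrightarrow> m < q \<Longrightarrow> b (Suc m) \<le> b m"
    and "b q \<ge> 0"
  shows "norm (\<Sum>m\<in>{p..q}. b m *\<^sub>R a m) \<le> 2 * b p * B"
proof -
  have "b q \<le> b p"
    using \<open>p \<le> q\<close> decreasing by (induction rule: inc_induct) force+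
  then have "norm (b p *\<^sub>R (\<Sum>m\<in>{p..q}. a m)) \<le> b p * B"
    using assms tails[of p] by (auto intro: mult_left_mono)
  moreover have "B * (b p - b q) \<le> b p * B"
  proof -
    have "B \<ge> 0"
      using assms(1) tails[of p] norm_ge_zero order_trans by blast
    with assms(4) show ?thesis
      by (simp add: mult.commute mult_left_mono right_diff_distrib)
  qed
  moreover have "norm ((\<Sum>m\<in>{p..q}. b m *\<^sub>R a m) - b p *\<^sub>R (\<Sum>m\<in>{p..q}. a m)) \<le> B * (b p - b q)"
    by (rule norm_sum_scaleR_minus_first_le) (use assms in auto)
  ultimately show ?thesis
    using norm_triangle_sub[of "\<Sum>m\<in>{p..q}. b m *\<^sub>R a m" "b p *\<^sub>R (\<Sum>m\<in>{p..q}. a m)"]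
    by linarith
qed

section \<open>The tail sums\<close>

lemma summable_Gsharp_terms:
  fixes g :: "nat \<Rightarrow> complex"
  assumes "summable (\<lambda>m. g m / of_nat m)"
  shows "summable (\<lambda>m. if real m > x then g m / of_nat m else 0)"
proof -
  have "finite {m::nat. real m \<le> x}"
    by (rule finite_subset[of _ "{..nat \<lfloor>x\<rfloor>}"]) (auto simp: le_nat_floor)
  then have "summable (\<lambda>m. g m / of_nat m - (if real m \<le> x then g m / of_nat m else 0))"
    by (intro summable_diff assms summable_finite) auto
  also have "(\<lambda>m. g m / of_nat m - (if real m \<le> x then g m / of_nat m else 0))
      = (\<lambda>m. if real m > x then g m / of_nat m else 0)"
    by auto
  finally show ?thesis .
qed

lemma Gsharp_LIMSEQ:
  assumes "summable (\<lambda>m. g m / of_nat m)" and "x \<ge> 0"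
  shows "(\<lambda>q. \<Sum>m\<in>{Suc (nat \<lfloor>x\<rfloor>)..q}. g m / of_nat m) \<longlonglongrightarrow> Gsharp g x"
proof -
  let ?f = "\<lambda>m. if real m > x then g m / of_nat m else 0"
  have "(\<Sum>m<Suc q. ?f m) = (\<Sum>m\<in>{Suc (nat \<lfloor>x\<rfloor>)..q}. g m / of_nat m)" for q
  proof -
    have "{m \<in> {..<Suc q}. real m > x} = {Suc (nat \<lfloor>x\<rfloor>)..q}"
      using assms(2) by (auto simp: Suc_le_eq) linarith+
    then show ?thesis
      by (subst sum.inter_filter[symmetric]) simp_all
  qed
  moreover have "(\<lambda>q. \<Sum>m<Suc q. ?f m) \<longlonglongrightarrow> Gsharp g x"
    unfolding Gsharp_def
    using LIMSEQ_Suc[OF summable_LIMSEQ[OF summable_Gsharp_terms[OF assms(1)]]] .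
  ultimately show ?thesis
    by simp
qed

lemma Gsharp_eq_plus_sum:
  assumes "summable (\<lambda>m. g m / of_nat m)" and "0 \<le> x" "x \<le> real M"
  shows "Gsharp g x = Gsharp g (real M) + (\<Sum>m\<in>{Suc (nat \<lfloor>x\<rfloor>)..M}. g m / of_nat m)"
proof -
  define K where "K = nat \<lfloor>x\<rfloor>"
  have "K \<le> M"
    using assms(3) unfolding K_def by linarith
  have "\<forall>\<^sub>F q in sequentially. (\<Sum>m\<in>{Suc K..M}. g m / of_nat m) + (\<Sum>m\<in>{Suc M..q}. g m / of_nat m)
      = (\<Sum>m\<in>{Suc K..q}. g m / of_nat m)"
  proof (intro eventually_sequentiallyI)
    fix q assume "M \<le> q"
    with \<open>K \<le> M\<close> have "{Suc K..q} = {Suc K..M} \<union> {Suc M..q}"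
      by auto
    then show "(\<Sum>m\<in>{Suc K..M}. g m / of_nat m) + (\<Sum>m\<in>{Suc M..q}. g m / of_nat m)
        = (\<Sum>m\<in>{Suc K..q}. g m / of_nat m)"
      by (simp add: sum.union_disjoint)
  qed
  then have "(\<lambda>q. \<Sum>m\<in>{Suc K..q}. g m / of_nat m)
      \<longlonglongrightarrow> (\<Sum>m\<in>{Suc K..M}. g m / of_nat m) + Gsharp g (real M)"
    using Gsharp_LIMSEQ[OF assms(1), of "real M"] by (auto intro: Lim_transform_eventually tendsto_add)
  with Gsharp_LIMSEQ[OF assms(1,2)] show ?thesis
    unfolding K_def by (simp add: LIMSEQ_unique add.commute)
qed

lemma ln_Suc_mult_norm_Gsharp_le:
  fixes g :: "nat \<Rightarrow> complex"
  assumes "summable (\<lambda>m. g m / of_nat m)" and "M \<ge> 1"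
    and tails: "\<And>k q. M < k \<Longrightarrow> norm (\<Sum>m\<in>{k..q}. g m * of_real (ln (real m)) / of_nat m) \<le> e"
  shows "ln (real (Suc M)) * norm (Gsharp g (real M)) \<le> 2 * e"
proof -
  have ln_pos: "ln (real (Suc M)) > 0"
    using assms(2) by simp
  have "norm (\<Sum>m\<in>{Suc M..q}. g m / of_nat m) \<le> 2 * e / ln (real (Suc M))" if "Suc M \<le> q" for q
  proof -
    have "norm (\<Sum>m\<in>{Suc M..q}. (1 / ln (real m)) *\<^sub>R (g m * of_real (ln (real m)) / of_nat m))
        \<le> 2 * (1 / ln (real (Suc M))) * e"
      by (rule norm_sum_scaleR_decreasing_le) (use that assms in \<open>auto intro!: divide_left_mono\<close>)
    moreover have "(1 / ln (real m)) *\<^sub>R (g m * of_real (ln (real m)) / of_nat m) = g m / of_nat m"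
      if "m \<in> {Suc M..q}" for m
      using that assms(2) by (simp add: scaleR_conv_of_real field_simps)
    ultimately show ?thesis
      by simp
  qed
  then have "norm (Gsharp g (real M)) \<le> 2 * e / ln (real (Suc M))"
    using Gsharp_LIMSEQ[OF assms(1), of "real M"]
    by (intro tendsto_le[OF _ tendsto_const tendsto_norm]) (auto intro: eventually_sequentiallyI)
  with ln_pos show ?thesis
    by (simp add: field_simps)
qed

lemma Gsharp_mult_ln_LIMSEQ_zero:
  fixes g :: "nat \<Rightarrow> complex"
  assumes "summable (\<lambda>m. g m / of_nat m)"
    and "summable (\<lambda>m. g m * of_real (ln (real m)) / of_nat m)"
    and "T \<ge> 1"
  shows "(\<lambda>M. Gsharp g (real M) * of_real (ln (real M / T))) \<longlonglongrightarrow> 0"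
proof (rule LIMSEQ_I)
  fix r :: real
  assume "r > 0"
  then obtain N where N: "\<And>k n. k \<ge> N \<Longrightarrow> norm (\<Sum>m\<in>{k..<n}. g m * of_real (ln (real m)) / of_nat m) < r / 4"
    using assms(2) unfolding summable_Cauchy by (meson divide_pos_pos zero_less_numeral)
  have "norm (Gsharp g (real M) * of_real (ln (real M / T))) < r" if M: "max N (nat \<lceil>T\<rceil>) \<le> M" for M
  proof -
    have "M \<ge> 1" "real M \<ge> T"
      using M assms(3) by linarith+
    have "ln (real (Suc M)) * norm (Gsharp g (real M)) \<le> 2 * (r / 4)"
    proof (rule ln_Suc_mult_norm_Gsharp_le[OF assms(1) \<open>M \<ge> 1\<close>])
      fix k q assume "M < k"
      then show "norm (\<Sum>m\<in>{k..q}. g m * of_real (ln (real m)) / of_nat m) \<le> r / 4"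
        using M N[of k "Suc q"] by (simp add: atLeastLessThanSuc_atLeastAtMost)
    qed
    moreover have "0 \<le> ln (real M / T)"
      using \<open>real M \<ge> T\<close> assms(3) by simp
    moreover have "ln (real M / T) \<le> ln (real (Suc M))"
    proof (rule ln_mono)
      have "real M * 1 \<le> real M * T"
        using assms(3) by (intro mult_left_mono) auto
      then show "real M / T \<le> real (Suc M)"
        using assms(3) by (simp add: divide_le_eq algebra_simps)
    qed (use \<open>real M \<ge> T\<close> assms(3) in auto)
    ultimately show ?thesis
      using \<open>r > 0\<close> mult_left_mono[of "ln (real M / T)" "ln (real (Suc M))" "norm (Gsharp g (real M))"]
      by (simp add: norm_mult mult.commute)
  qed
  then show "\<exists>N. \<forall>M\<ge>N. norm (Gsharp g (real M) * of_real (ln (real M / T)) - 0) < r"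
    by (metis diff_zero)
qed

section \<open>Integrating the tail sums\<close>

lemma has_integral_inverse_real:
  fixes a b :: real
  assumes "0 < a" "a \<le> b"
  shows "((\<lambda>t. 1 / t) has_integral ln (b / a)) {a..b}"
proof -
  have "((\<lambda>t. 1 / t) has_integral (ln b - ln a)) {a..b}"
    using assms by (intro fundamental_theorem_of_calculus)
      (auto intro!: derivative_eq_intros simp: has_real_derivative_iff_has_vector_derivative[symmetric])
  with assms show ?thesis
    by (simp add: ln_div)
qed

lemma has_integral_divide_of_real:
  fixes C :: complex
  assumes "0 < a" "a \<le> b"
  shows "((\<lambda>t. C / of_real t) has_integral (C * of_real (ln (b / a)))) {a..b}"
  using has_integral_mult_right[OF has_integral_of_real[OF has_integral_inverse_real[OF assms]], of C]
  by (simp add: divide_inverse)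

lemma has_integral_divide_of_real_cutoff:
  fixes C :: complex
  assumes "0 < a" "a \<le> c" "c \<le> b"
  shows "((\<lambda>t. if t < c then C / of_real t else 0) has_integral (C * of_real (ln (c / a)))) {a..b}"
proof -
  have "((\<lambda>t. if t \<in> {a..c} then C / of_real t else 0) has_integral (C * of_real (ln (c / a)))) {a..b}"
    using has_integral_divide_of_real[of a c C] assms
    unfolding has_integral_restrict_Int by (simp add: Int_absorb2)
  then show ?thesis
    by (rule has_integral_spike_finite[where S = "{c}", rotated 2]) (use assms in auto)
qed

lemma Gsharp_has_integral:
  fixes g :: "nat \<Rightarrow> complex"
  assumes "summable (\<lambda>m. g m / of_nat m)" and "0 < T" "T \<le> real M"
  shows "((\<lambda>t. Gsharp g t / of_real t) has_integral
           (Gsharp g (real M) * of_real (ln (real M / T))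
            + (\<Sum>m\<in>{Suc (nat \<lfloor>T\<rfloor>)..M}. g m / of_nat m * of_real (ln (real m / T))))) {T..real M}"
proof -
  define S where "S = {Suc (nat \<lfloor>T\<rfloor>)..M}"
  have "((\<lambda>t. Gsharp g (real M) / of_real t
            + (\<Sum>m\<in>S. if t < real m then (g m / of_nat m) / of_real t else 0)) has_integral
          (Gsharp g (real M) * of_real (ln (real M / T))
           + (\<Sum>m\<in>S. g m / of_nat m * of_real (ln (real m / T))))) {T..real M}"
  proof (intro has_integral_add has_integral_sum)
    show "((\<lambda>t. Gsharp g (real M) / of_real t) has_integral Gsharp g (real M) * of_real (ln (real M / T))) {T..real M}"
      using assms by (intro has_integral_divide_of_real) auto
  next
    fix m assume "m \<in> S"
    then have "T < real m" "real m \<le> real M"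
      using assms(2) unfolding S_def by (auto simp: Suc_le_eq) linarith
    then show "((\<lambda>t. if t < real m then (g m / of_nat m) / of_real t else 0) has_integral
        g m / of_nat m * of_real (ln (real m / T))) {T..real M}"
      using assms(2) by (intro has_integral_divide_of_real_cutoff) auto
  qed (simp add: S_def)
  then show ?thesis
    unfolding S_def[symmetric]
  proof (rule has_integral_eq[rotated])
    fix t assume t: "t \<in> {T..real M}"
    have "{m \<in> S. t < real m} = {Suc (nat \<lfloor>t\<rfloor>)..M}"
      using t assms(2) unfolding S_def by (auto simp: Suc_le_eq) linarith+
    then have "(\<Sum>m\<in>S. if t < real m then (g m / of_nat m) / of_real t else 0)
        = (\<Sum>m\<in>{Suc (nat \<lfloor>t\<rfloor>)..M}. g m / of_nat m) / of_real t"
      by (simp add: sum.inter_filter[symmetric] sum_divide_distrib S_def)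
    moreover have "Gsharp g t = Gsharp g (real M) + (\<Sum>m\<in>{Suc (nat \<lfloor>t\<rfloor>)..M}. g m / of_nat m)"
      using t assms by (intro Gsharp_eq_plus_sum) auto
    ultimately show "Gsharp g (real M) / of_real t
        + (\<Sum>m\<in>S. if t < real m then (g m / of_nat m) / of_real t else 0) = Gsharp g t / of_real t"
      by (simp add: add_divide_distrib)
  qed
qed

lemma integral_Gsharp_LIMSEQ:
  fixes g :: "nat \<Rightarrow> complex"
  assumes "summable (\<lambda>m. g m / of_nat m)"
    and integrable: "(\<lambda>t. norm (Gsharp g t) / t) integrable_on {1..}"
    and "1 \<le> T"
  shows "(\<lambda>M. integral {T..real M} (\<lambda>t. Gsharp g t / of_real t))
           \<longlonglongrightarrow> integral {T..} (\<lambda>t. Gsharp g t / of_real t)"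
proof -
  define F where "F t = Gsharp g t / of_real t" for t
  define f where "f M t = (if t \<in> {T..real M} then F t else 0)" for M :: nat and t
  have restrict: "{T..real M} \<inter> {1..} = {T..real M}" "{T..} \<inter> {1..} = {T..}" for M
    using assms(3) by auto
  have "f M integrable_on {1..}" for M
  proof (cases "T \<le> real M")
    case True
    then have "F integrable_on {T..real M}"
      unfolding F_def using assms(3) by (intro has_integral_integrable[OF Gsharp_has_integral[OF assms(1)]]) auto
    then show ?thesis
      unfolding f_def integrable_restrict_Int restrict .
  next
    case False
    then have "f M = (\<lambda>t. 0)"
      by (auto simp: f_def)
    then show ?thesis
      by (simp add: integrable_0)
  qed
  moreover have "norm (f M t) \<le> norm (Gsharp g t) / t" if "t \<in> {1..}" for M t
    using that by (simp add: f_def F_def norm_divide)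
  moreover have "(\<lambda>M. f M t) \<longlonglongrightarrow> (if t \<in> {T..} then F t else 0)" for t
  proof (rule tendsto_eventually)
    show "\<forall>\<^sub>F M in sequentially. f M t = (if t \<in> {T..} then F t else 0)"
    proof (rule eventually_mono[OF eventually_ge_at_top[of "nat \<lceil>t\<rceil>"]])
      fix M assume "nat \<lceil>t\<rceil> \<le> M"
      then have "t \<le> real M"
        by linarith
      then show "f M t = (if t \<in> {T..} then F t else 0)"
        by (simp add: f_def)
    qed
  qed
  ultimately have "(\<lambda>M. integral {1..} (f M)) \<longlonglongrightarrow> integral {1..} (\<lambda>t. if t \<in> {T..} then F t else 0)"
    by (rule dominated_convergence(2)[OF _ integrable])
  then show ?thesis
    unfolding f_def integral_restrict_Int restrict F_def .
qed

lemma suminf_plus_integral_Gsharp: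
  fixes g :: "nat \<Rightarrow> complex"
  assumes "summable (\<lambda>m. g m / of_nat m)"
    and "summable (\<lambda>m. g m * of_real (ln (real m)) / of_nat m)"
    and "(\<lambda>t. norm (Gsharp g t) / t) integrable_on {1..}"
    and "T \<ge> 1"
  shows "(\<Sum>m. g m / of_nat m * of_real (ln (T / real m))) + integral {T..} (\<lambda>t. Gsharp g t / of_real t)
       = (\<Sum>m\<in>{1..nat \<lfloor>T\<rfloor>}. g m / of_nat m * of_real (ln (T / real m)))"
proof -
  define h where "h m = g m / of_nat m * of_real (ln (T / real m))" for m
  define F where "F t = Gsharp g t / of_real t" for t
  define K where "K = nat \<lfloor>T\<rfloor>"
  have "h = (\<lambda>m. of_real (ln T) * (g m / of_nat m) - g m * of_real (ln (real m)) / of_nat m)"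
  proof
    fix m
    show "h m = of_real (ln T) * (g m / of_nat m) - g m * of_real (ln (real m)) / of_nat m"
      using assms(4) by (cases "m = 0") (simp_all add: h_def ln_div algebra_simps)
  qed
  then have "summable h"
    using assms(1,2) by (simp only:) (intro summable_diff summable_mult)
  then have "(\<lambda>M. (\<Sum>m<Suc M. h m) + integral {T..real M} F) \<longlonglongrightarrow> suminf h + integral {T..} F"
    unfolding F_def using assms
    by (intro tendsto_add LIMSEQ_Suc[OF summable_LIMSEQ] integral_Gsharp_LIMSEQ) auto
  moreover have "\<forall>\<^sub>F M in sequentially. (\<Sum>m\<in>{1..K}. h m) + Gsharp g (real M) * of_real (ln (real M / T))
      = (\<Sum>m<Suc M. h m) + integral {T..real M} F"
    using eventually_ge_at_top[of "nat \<lceil>T\<rceil>"]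
  proof eventually_elim
    case (elim M)
    then have "T \<le> real M" "K \<le> M"
      unfolding K_def by linarith+
    have "{..<Suc M} = insert 0 ({1..K} \<union> {Suc K..M})"
      using \<open>K \<le> M\<close> by auto
    then have "(\<Sum>m<Suc M. h m) = (\<Sum>m\<in>{1..K}. h m) + (\<Sum>m\<in>{Suc K..M}. h m)"
      by (simp add: sum.union_disjoint h_def)
    moreover have "h m = - (g m / of_nat m * of_real (ln (real m / T)))" if "m \<in> {Suc K..M}" for m
      using that assms(4) by (simp add: h_def ln_div algebra_simps)
    moreover have "integral {T..real M} F = Gsharp g (real M) * of_real (ln (real M / T))
        + (\<Sum>m\<in>{Suc K..M}. g m / of_nat m * of_real (ln (real m / T)))"
      unfolding F_def K_def using Gsharp_has_integral[OF assms(1)] \<open>T \<le> real M\<close> assms(4)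
      by (intro integral_unique) auto
    ultimately show ?case
      by (simp add: sum_negf)
  qed
  with tendsto_add[OF tendsto_const Gsharp_mult_ln_LIMSEQ_zero[OF assms(1,2,4)]]
  have "(\<lambda>M. (\<Sum>m<Suc M. h m) + integral {T..real M} F) \<longlonglongrightarrow> (\<Sum>m\<in>{1..K}. h m) + 0"
    by (rule Lim_transform_eventually)
  ultimately show ?thesis
    unfolding h_def F_def K_def using LIMSEQ_unique by fastforce
qed

section \<open>The error term\<close>

lemma nat_floor_div_nat:
  fixes D :: real and m :: nat
  assumes "D \<ge> 0" "m > 0"
  shows "nat \<lfloor>D\<rfloor> div m = nat \<lfloor>D / real m\<rfloor>"
proof -
  have "\<lfloor>D / real m\<rfloor> = \<lfloor>D\<rfloor> div int m"
    using floor_divide_real_eq_div[of "int m" D] by simp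
  with assms show ?thesis
    by (simp add: nat_div_distrib)
qed

lemma harm_cutoff_minus_ln_bound:
  fixes D :: real and m :: nat
  assumes "D \<ge> 1" "m \<ge> 1" "real m \<le> exp euler_mascheroni * D"
  shows "\<bar>(if m \<le> nat \<lfloor>D\<rfloor> then harm (nat \<lfloor>D\<rfloor> div m) else 0) - (ln (D / real m) + euler_mascheroni)\<bar>
    \<le> real m / D * (euler_mascheroni - ln (max 1 (real m / D)))"
proof (cases "m \<le> nat \<lfloor>D\<rfloor>")
  case True
  then have "real m \<le> D"
    using assms(1) by linarith
  then have "D / real m \<ge> 1"
    using assms by (simp add: le_divide_eq)
  then have "\<bar>harm (nat \<lfloor>D / real m\<rfloor>) - ln (D / real m) - euler_mascheroni\<bar> \<le> euler_mascheroni / (D / real m)"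
    by (rule harm_floor_approx)
  moreover have "max 1 (real m / D) = 1"
    using \<open>real m \<le> D\<close> assms by (simp add: divide_le_eq)
  ultimately show ?thesis
    using True assms by (simp add: nat_floor_div_nat algebra_simps)
next
  case False
  then have "real m / D > 1"
    using assms by (simp add: less_divide_eq) linarith
  moreover have "ln (real m / D) \<le> ln (exp euler_mascheroni)"
    using assms by (intro ln_mono) (auto simp: divide_le_eq mult.commute)
  moreover have "ln (D / real m) = - ln (real m / D)"
    using assms by (simp add: ln_div)
  ultimately show ?thesis
    using False mult_right_mono[of 1 "real m / D" "euler_mascheroni - ln (real m / D)"] by simp
qed

lemma norm_harm_cutoff_term_minus_ln_term_le:
  fixes z :: complex and D :: real and m :: nat
  assumes "D \<ge> 1" "m \<ge> 1" "real m \<le> exp euler_mascheroni * D"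
  shows "norm (z / of_nat m * of_real (if m \<le> nat \<lfloor>D\<rfloor> then harm (nat \<lfloor>D\<rfloor> div m) else 0)
      - z / of_nat m * of_real (ln (D / real m) + euler_mascheroni))
    \<le> norm z / D * (euler_mascheroni - ln (max 1 (real m / D)))"
proof -
  have "norm (z / of_nat m * of_real (if m \<le> nat \<lfloor>D\<rfloor> then harm (nat \<lfloor>D\<rfloor> div m) else 0)
      - z / of_nat m * of_real (ln (D / real m) + euler_mascheroni))
    = norm z / real m * \<bar>(if m \<le> nat \<lfloor>D\<rfloor> then harm (nat \<lfloor>D\<rfloor> div m) else 0)
        - (ln (D / real m) + euler_mascheroni)\<bar>"
    by (simp only: norm_mult norm_divide norm_of_real norm_of_nat flip: right_diff_distrib of_real_diff)
  also have "\<dots> \<le> norm z / real m * (real m / D * (euler_mascheroni - ln (max 1 (real m / D))))"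
    using assms by (intro mult_left_mono harm_cutoff_minus_ln_bound) auto
  also have "\<dots> = norm z / D * (euler_mascheroni - ln (max 1 (real m / D)))"
    using assms(2) by simp
  finally show ?thesis .
qed

lemma has_integral_partial_sums_div:
  fixes a :: "nat \<Rightarrow> real" and D c :: real
  assumes "D > 0" "c \<ge> 1"
  shows "((\<lambda>u. (\<Sum>m\<in>{1..nat \<lfloor>u * D\<rfloor>}. a m) / u) has_integral
           (\<Sum>m\<in>{1..nat \<lfloor>c * D\<rfloor>}. a m * (ln c - ln (max 1 (real m / D))))) {1..c}"
proof -
  define K where "K = nat \<lfloor>c * D\<rfloor>"
  define s where "s m = max 1 (real m / D)" for m
  have "s m \<le> c" if "m \<in> {1..K}" for m
    using that assms unfolding s_def K_def by (auto simp: divide_le_eq) linarith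
  then have "((\<lambda>u. if u \<in> {s m..c} then a m / u else 0) has_integral (a m * (ln c - ln (s m)))) {1..c}"
    if "m \<in> {1..K}" for m
    using has_integral_mult_right[OF has_integral_inverse_real[of "s m" c], of "a m"] that
    unfolding has_integral_restrict_Int by (simp add: s_def Int_absorb2 ln_div)
  then have "((\<lambda>u. \<Sum>m\<in>{1..K}. if u \<in> {s m..c} then a m / u else 0) has_integral
      (\<Sum>m\<in>{1..K}. a m * (ln c - ln (s m)))) {1..c}"
    by (intro has_integral_sum) auto
  then show ?thesis
    unfolding K_def[symmetric] s_def[symmetric]
  proof (rule has_integral_eq[rotated])
    fix u assume u: "u \<in> {1..c}"
    have "{m \<in> {1..K}. u \<in> {s m..c}} = {1..nat \<lfloor>u * D\<rfloor>}"
    proof -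
      have "u * D \<le> c * D"
        using u assms by (intro mult_right_mono) auto
      then show ?thesis
        using u assms unfolding K_def s_def
        by (auto simp: divide_le_eq le_nat_iff le_floor_iff intro: order_trans[OF _ \<open>u * D \<le> c * D\<close>])
    qed
    then show "(\<Sum>m\<in>{1..K}. if u \<in> {s m..c} then a m / u else 0) = (\<Sum>m\<in>{1..nat \<lfloor>u * D\<rfloor>}. a m) / u"
      by (simp add: sum.inter_filter[symmetric] sum_divide_distrib)
  qed
qed

theorem mainTheorem11:
  fixes g :: "nat \<Rightarrow> complex" and D :: real
  assumes "summable (\<lambda>m. g m / of_nat m)"
      and "summable (\<lambda>m. g m * complex_of_real (ln (real m)) / of_nat m)"
      and "(\<lambda>t. norm (Gsharp g t) / t) integrable_on {1..}"
      and "D \<ge> 1"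
  shows "\<exists>E::complex.
     (\<Sum>n\<in>{1..nat \<lfloor>D\<rfloor>}. conv_one g n / of_nat n)
       = (\<Sum>m. g m / of_nat m * complex_of_real (ln (D / real m) + euler_mascheroni))
         + integral {exp euler_mascheroni * D..} (\<lambda>t. Gsharp g t / complex_of_real t)
         + E
     \<and> norm E \<le> (1 / D) * integral {1..exp euler_mascheroni}
          (\<lambda>u. (\<Sum>m\<in>{1..nat \<lfloor>u * D\<rfloor>}. norm (g m)) / u)"
proof -
  define T where "T = exp euler_mascheroni * D"
  define N where "N = nat \<lfloor>D\<rfloor>"
  define K where "K = nat \<lfloor>T\<rfloor>"
  define c where "c m = g m / of_nat m * of_real (if m \<le> N then harm (N div m) else 0)" for m
  define h where "h m = g m / of_nat m * of_real (ln (D / real m) + euler_mascheroni)" for m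
  have "D \<le> T"
    using assms(4) euler_mascheroni_pos by (simp add: T_def)
  have lhs: "(\<Sum>n\<in>{1..N}. conv_one g n / of_nat n) = (\<Sum>m\<in>{1..K}. c m)"
    unfolding c_def N_def K_def using \<open>D \<le> T\<close> by (intro sum_conv_one_div_eq_sum_cutoff nat_mono floor_mono)
  have main: "(\<Sum>m. h m) + integral {T..} (\<lambda>t. Gsharp g t / of_real t) = (\<Sum>m\<in>{1..K}. h m)"
  proof -
    have "g m / of_nat m * of_real (ln (T / real m)) = h m" for m
      using assms(4) by (cases "m = 0") (simp_all add: h_def T_def ln_div ln_mult)
    with suminf_plus_integral_Gsharp[OF assms(1-3), of T] \<open>D \<le> T\<close> assms(4) show ?thesis
      by (simp add: K_def)
  qed
  have "norm (c m - h m) \<le> norm (g m) / D * (euler_mascheroni - ln (max 1 (real m / D)))"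
    if "m \<in> {1..K}" for m
    using that \<open>D \<le> T\<close> assms(4) unfolding c_def h_def N_def K_def T_def
    by (intro norm_harm_cutoff_term_minus_ln_term_le) (auto simp: le_nat_iff le_floor_iff)
  then have "norm (\<Sum>m\<in>{1..K}. c m - h m)
      \<le> (1 / D) * (\<Sum>m\<in>{1..K}. norm (g m) * (euler_mascheroni - ln (max 1 (real m / D))))"
    by (auto simp: sum_distrib_left intro: order_trans[OF norm_sum sum_mono])
  also have "(\<Sum>m\<in>{1..K}. norm (g m) * (euler_mascheroni - ln (max 1 (real m / D))))
      = integral {1..exp euler_mascheroni} (\<lambda>u. (\<Sum>m\<in>{1..nat \<lfloor>u * D\<rfloor>}. norm (g m)) / u)"
    using has_integral_partial_sums_div[of D "exp euler_mascheroni" "\<lambda>m. norm (g m)"] assms(4)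
      euler_mascheroni_pos
    by (simp add: K_def T_def integral_unique[symmetric])
  finally show ?thesis
    using lhs main unfolding N_def[symmetric] T_def[symmetric] h_def[symmetric] sum_subtractf
    by (intro exI[of _ "(\<Sum>m\<in>{1..K}. c m) - (\<Sum>m\<in>{1..K}. h m)"]) (simp add: algebra_simps)
qed

end
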